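(* Let $T$ be a finite tile set, let $c\in\mathbb{N}$, and let $\tau_1,\tau_2,\dots$ be an infinite sequence of nondecreasing temperature functions such that for each $i$ the size-dependent system $(T,\tau_i)$ self-assembles a $k_i\times h_i$ rectangle with $h_i\le c$, where the widths $k_i$ are pairwise distinct. Let $f(n)=\min_{i\in\mathbb{N}}\tau_i(n)$. Then $f$ is bounded: there is a constant $C$ (e.g. $C=(c+1)g_{\max}$, with $g_{\max}$ the maximum glue strength in $T$) such that $f(n)\le C$ for all $n\in\mathbb{N}$.
   Context: Size-dependent two-handed tile assembly model. A tile type is a quadruple $(g_N,g_E,g_S,g_W)$ of glues from an alphabet $\Sigma$, each glue $g$ having a non-negative integer strength $\mathrm{str}(g)$. A tile is a unit square centered at a point of $\mathbb{Z}^2$ labeled by a tile type; two tiles are adjacent if their centers are at distance 1. An assembly is a partial map $\alpha:\mathbb{Z}^2\to T$ with finite domain $\mathrm{dom}(\alpha)$. Two adjacent tiles form a bond if the glues on their abutting edges are equal and of positive strength; the strength of the bond is that glue's strength. The bond graph of $\alpha$ has vertex set $\mathrm{dom}(\alpha)$ and an edge for each bond. A cut of an assembly is an edge cut of its bond graph (a partition of $\mathrm{dom}(\alpha)$ into two nonempty parts), and its strength is the total strength of bonds crossing it. A supertile $\tilde\alpha$ is the equivalence class of an assembly under translation; its size $|\tilde\alpha|$ is the number of tiles of an assembly in it. A size-dependent system is a pair $(T,\tau)$ with $T$ a finite tile set and $\tau:\mathbb{N}\to\mathbb{N}$ a nondecreasing temperature function. An assembly $\gamma$ is $\tau$-stable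 if every cut partitioning $\mathrm{dom}(\gamma)$ into parts $\alpha,\beta$ has strength at least $\tau(\min(|\alpha|,|\beta|))$. Two supertiles $\tilde\alpha,\tilde\beta$ can combine into $\tilde\gamma$ if there are disjoint assemblies $\alpha\in\tilde\alpha$, $\beta\in\tilde\beta$ with $\alpha\cup\beta=\gamma\in\tilde\gamma$ and the cut separating $\mathrm{dom}(\alpha)$ from $\mathrm{dom}(\beta)$ has strength at least $\tau(\min(|\alpha|,|\beta|))$. A supertile $\tilde\gamma$ can break into $\tilde\alpha,\tilde\beta$ if there are disjoint assemblies $\alpha\in\tilde\alpha,\beta\in\tilde\beta$ with connected bond graphs, $\alpha\cup\beta=\gamma\in\tilde\gamma$, and the cut separating them has strength less than $\tau(\min(|\alpha|,|\beta|))$. A supertile is producible if it is a single tile of a type in $T$, a combination of two producible supertiles, or a result of a break of a producible supertile. A producible supertile is terminal if it can combine with no producible supertile and cannot break. The system self-assembles a shape $P\subseteq\mathbb{Z}^2$ if every terminal supertile has an assembly whose domain is exactly $P$, and at least one terminal supertile exists. A $w\times h$ rectangle is a set $\{x+1,\dots,x+w\}\times\{y+1,\dots,y+h\}$ for some integers $x,y$. *)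

theory Defs
  imports Main
begin

type_synonym 'g tile = "'g \<times> 'g \<times> 'g \<times> 'g"

definition gN :: "'g tile \<Rightarrow> 'g" where "gN t = fst t"
definition gE :: "'g tile \<Rightarrow> 'g" where "gE t = fst (snd t)"
definition gS :: "'g tile \<Rightarrow> 'g" where "gS t = fst (snd (snd t))"
definition gW :: "'g tile \<Rightarrow> 'g" where "gW t = snd (snd (snd t))"

type_synonym pos = "int \<times> int"

type_synonym 'g assembly = "pos \<Rightarrow> 'g tile option"

definition is_assembly :: "'g assembly \<Rightarrow> bool" where
  "is_assembly \<alpha> \<longleftrightarrow> finite (dom \<alpha>)"

definition asize :: "'g assembly \<Rightarrow> nat" where
  "asize \<alpha> = card (dom \<alpha>)"

definition glue_bond :: "('g \<Rightarrow> nat) \<Rightarrow> 'g \<Rightarrow> 'g \<Rightarrow> nat" where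
  "glue_bond str g g' = (if g = g' \<and> str g > 0 then str g else 0)"

definition bond_str :: "('g \<Rightarrow> nat) \<Rightarrow> 'g assembly \<Rightarrow> pos \<Rightarrow> pos \<Rightarrow> nat" where
  "bond_str str \<alpha> p q =
     (case (\<alpha> p, \<alpha> q) of
        (Some s, Some t) \<Rightarrow>
          (if q = (fst p + 1, snd p) then glue_bond str (gE s) (gW t)
           else if q = (fst p - 1, snd p) then glue_bond str (gW s) (gE t)
           else if q = (fst p, snd p + 1) then glue_bond str (gN s) (gS t)
           else if q = (fst p, snd p - 1) then glue_bond str (gS s) (gN t)
           else 0)
      | _ \<Rightarrow> 0)"

definition bonded :: "('g \<Rightarrow> nat) \<Rightarrow> 'g assembly \<Rightarrow> pos \<Rightarrow> pos \<Rightarrow> bool" where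
  "bonded str \<alpha> p q \<longleftrightarrow> bond_str str \<alpha> p q > 0"

definition cut_str :: "('g \<Rightarrow> nat) \<Rightarrow> 'g assembly \<Rightarrow> pos set \<Rightarrow> pos set \<Rightarrow> nat" where
  "cut_str str \<alpha> A B = (\<Sum>(p, q) \<in> A \<times> B. bond_str str \<alpha> p q)"

definition bond_connected :: "('g \<Rightarrow> nat) \<Rightarrow> 'g assembly \<Rightarrow> bool" where
  "bond_connected str \<alpha> \<longleftrightarrow> dom \<alpha> \<noteq> {} \<and>
     (\<forall>p \<in> dom \<alpha>. \<forall>q \<in> dom \<alpha>. (bonded str \<alpha>)\<^sup>*\<^sup>* p q)"

definition translate :: "pos \<Rightarrow> 'g assembly \<Rightarrow> 'g assembly" where
  "translate v \<alpha> = (\<lambda>p. \<alpha> (fst p - fst v, snd p - snd v))"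

definition supertile :: "'g assembly \<Rightarrow> 'g assembly set" where
  "supertile \<alpha> = {translate v \<alpha> | v. True}"

definition can_combine ::
  "('g \<Rightarrow> nat) \<Rightarrow> (nat \<Rightarrow> nat) \<Rightarrow> 'g assembly set \<Rightarrow> 'g assembly set \<Rightarrow> 'g assembly set \<Rightarrow> bool" where
  "can_combine str \<tau> S1 S2 S3 \<longleftrightarrow>
     (\<exists>\<alpha> \<in> S1. \<exists>\<beta> \<in> S2. dom \<alpha> \<inter> dom \<beta> = {} \<and> (\<alpha> ++ \<beta>) \<in> S3 \<and>
        cut_str str (\<alpha> ++ \<beta>) (dom \<alpha>) (dom \<beta>) \<ge> \<tau> (min (asize \<alpha>) (asize \<beta>)))"

definition can_break ::
  "('g \<Rightarrow> nat) \<Rightarrow> (nat \<Rightarrow> nat) \<Rightarrow> 'g assembly set \<Rightarrow> 'g assembly set \<Rightarrow> 'g assembly set \<Rightarrow> bool" where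
  "can_break str \<tau> S S1 S2 \<longleftrightarrow>
     (\<exists>\<alpha> \<in> S1. \<exists>\<beta> \<in> S2. dom \<alpha> \<inter> dom \<beta> = {} \<and>
        bond_connected str \<alpha> \<and> bond_connected str \<beta> \<and> (\<alpha> ++ \<beta>) \<in> S \<and>
        cut_str str (\<alpha> ++ \<beta>) (dom \<alpha>) (dom \<beta>) < \<tau> (min (asize \<alpha>) (asize \<beta>)))"

inductive_set producible ::
  "('g \<Rightarrow> nat) \<Rightarrow> 'g tile set \<Rightarrow> (nat \<Rightarrow> nat) \<Rightarrow> 'g assembly set set"
  for str T \<tau> where
  single: "t \<in> T \<Longrightarrow> supertile [(0, 0) \<mapsto> t] \<in> producible str T \<tau>"
| combine: "S1 \<in> producible str T \<tau> \<Longrightarrow> S2 \<in> producible str T \<tau> \<Longrightarrow>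
    can_combine str \<tau> S1 S2 (supertile \<gamma>) \<Longrightarrow> supertile \<gamma> \<in> producible str T \<tau>"
| break1: "S \<in> producible str T \<tau> \<Longrightarrow>
    can_break str \<tau> S (supertile \<alpha>) (supertile \<beta>) \<Longrightarrow> supertile \<alpha> \<in> producible str T \<tau>"
| break2: "S \<in> producible str T \<tau> \<Longrightarrow>
    can_break str \<tau> S (supertile \<alpha>) (supertile \<beta>) \<Longrightarrow> supertile \<beta> \<in> producible str T \<tau>"

definition terminal ::
  "('g \<Rightarrow> nat) \<Rightarrow> 'g tile set \<Rightarrow> (nat \<Rightarrow> nat) \<Rightarrow> 'g assembly set \<Rightarrow> bool" where
  "terminal str T \<tau> S \<longleftrightarrow> S \<in> producible str T \<tau> \<and>
     \<not> (\<exists>S2 \<in> producible str T \<tau>. \<exists>\<gamma>. can_combine str \<tau> S S2 (supertile \<gamma>)) \<and>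
     \<not> (\<exists>\<alpha> \<beta>. can_break str \<tau> S (supertile \<alpha>) (supertile \<beta>))"

definition self_assembles ::
  "('g \<Rightarrow> nat) \<Rightarrow> 'g tile set \<Rightarrow> (nat \<Rightarrow> nat) \<Rightarrow> pos set \<Rightarrow> bool" where
  "self_assembles str T \<tau> P \<longleftrightarrow>
     (\<forall>S. terminal str T \<tau> S \<longrightarrow> (\<exists>\<alpha> \<in> S. dom \<alpha> = P)) \<and>
     (\<exists>S. terminal str T \<tau> S)"

definition is_rectangle :: "nat \<Rightarrow> nat \<Rightarrow> pos set \<Rightarrow> bool" where
  "is_rectangle w h P \<longleftrightarrow>
     (\<exists>x y. P = {x + 1 .. x + int w} \<times> {y + 1 .. y + int h})"

end

theory Submission
  imports Defs
begin

text \<open>A terminal supertile forces \<open>\<tau> 1 > 0\<close> (otherwise a far-away single tile could still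
  attach), so by monotonicity every producible assembly is bond-connected. A connected assembly
  filling a \<open>k \<times> h\<close> rectangle with \<open>k \<ge> 2n + 2\<close> splits, across one vertical line, into two
  connected parts of more than \<open>n\<close> tiles each; this cut crosses at most \<open>h \<le> c\<close> bonds, each no
  stronger than the strongest glue. As the terminal assembly cannot break along it, \<open>\<tau> n\<close> is at
  most \<open>c\<close> times that strength. Distinct widths provide, for every \<open>n\<close>, a system whose rectangle
  is at least \<open>2n + 2\<close> wide.\<close>
section \<open>Connected components of a relation\<close>

definition within :: "('a \<Rightarrow> 'a \<Rightarrow> bool) \<Rightarrow> 'a set \<Rightarrow> 'a \<Rightarrow> 'a \<Rightarrow> bool" where
  "within R A u w \<longleftrightarrow> R u w \<and> u \<in> A \<and> w \<in> A"

definition connected_on :: "('a \<Rightarrow> 'a \<Rightarrow> bool) \<Rightarrow> 'a set \<Rightarrow> bool" where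
  "connected_on R A \<longleftrightarrow> (\<forall>u\<in>A. \<forall>w\<in>A. (within R A)\<^sup>*\<^sup>* u w)"

definition component :: "('a \<Rightarrow> 'a \<Rightarrow> bool) \<Rightarrow> 'a set \<Rightarrow> 'a \<Rightarrow> 'a set" where
  "component R A p = {u. (within R A)\<^sup>*\<^sup>* p u}"

lemma within_le: "within R A \<le> R"
  by (auto simp: within_def)

lemma within_mono: "A \<subseteq> B \<Longrightarrow> within R A \<le> within R B"
  by (auto simp: within_def)

lemma symp_within: "symp R \<Longrightarrow> symp (within R A)"
  by (auto simp: within_def symp_def)

lemma rtranclp_sym: "symp R \<Longrightarrow> R\<^sup>*\<^sup>* u w \<Longrightarrow> R\<^sup>*\<^sup>* w u"
  using symp_rtranclp sympD by metis

lemma rtranclp_exit_edge: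
  assumes "R\<^sup>*\<^sup>* a b" "a \<in> X" "b \<notin> X"
  obtains u w where "R u w" "u \<in> X" "w \<notin> X"
  using assms by induction auto

lemma connected_union_by_edge:
  assumes "symp R" "\<forall>u\<in>A. \<forall>w\<in>A. R\<^sup>*\<^sup>* u w" "\<forall>u\<in>B. \<forall>w\<in>B. R\<^sup>*\<^sup>* u w"
    and "p \<in> A" "q \<in> B" "R p q"
  shows "\<forall>u\<in>A \<union> B. \<forall>w\<in>A \<union> B. R\<^sup>*\<^sup>* u w"
proof -
  have "R\<^sup>*\<^sup>* p q" "R\<^sup>*\<^sup>* q p" using assms(1,6) by (auto dest: sympD)
  have hub: "R\<^sup>*\<^sup>* u p \<and> R\<^sup>*\<^sup>* p u" if "u \<in> A \<union> B" for u
  proof (cases "u \<in> A")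
    case True
    then show ?thesis using assms(2,4) by blast
  next
    case False
    then have "R\<^sup>*\<^sup>* u q" "R\<^sup>*\<^sup>* q u" using that assms(3,5) by blast+
    then show ?thesis using \<open>R\<^sup>*\<^sup>* p q\<close> \<open>R\<^sup>*\<^sup>* q p\<close> by (meson rtranclp_trans)
  qed
  show ?thesis using hub by (meson rtranclp_trans)
qed

lemma component_subset:
  assumes "p \<in> A"
  shows "component R A p \<subseteq> A"
proof
  fix u assume "u \<in> component R A p"
  then have "(within R A)\<^sup>*\<^sup>* p u" by (simp add: component_def)
  then show "u \<in> A" using assms by (induction rule: rtranclp_induct) (auto simp: within_def)
qed

lemma start_in_component: "p \<in> component R A p"
  by (simp add: component_def)

lemma component_closed: "u \<in> component R A p \<Longrightarrow> within R A u w \<Longrightarrow> w \<in> component R A p"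
  by (auto simp: component_def intro: rtranclp.rtrancl_into_rtrancl)

lemma component_connected:
  assumes "symp R"
  shows "connected_on R (component R A p)"
proof -
  let ?X = "component R A p"
  have from_start: "(within R ?X)\<^sup>*\<^sup>* p u" if "u \<in> ?X" for u
  proof -
    have "(within R A)\<^sup>*\<^sup>* p u" using that by (simp add: component_def)
    then show ?thesis
    proof (induction rule: rtranclp_induct)
      case (step v w)
      then have "v \<in> ?X" "w \<in> ?X" by (auto simp: component_def intro: rtranclp.rtrancl_into_rtrancl)
      with step show ?case by (auto simp: within_def intro: rtranclp.rtrancl_into_rtrancl)
    qed simp
  qed
  show ?thesis
    unfolding connected_on_def
    using from_start rtranclp_sym[OF symp_within[OF assms]] by (meson rtranclp_trans)
qed

text \<open>Every vertex outside the removed component reaches \<open>p\<close> without entering it.\<close>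

lemma connected_on_complement_component:
  assumes "symp R"
    and edges: "\<And>u w. R u w \<Longrightarrow> u \<in> V \<and> w \<in> V"
    and conn: "\<And>u. u \<in> V \<Longrightarrow> R\<^sup>*\<^sup>* u p"
    and X: "X \<subseteq> V" "p \<in> X" "connected_on R X"
    and q: "q \<in> V - X"
  shows "connected_on R (V - component R (V - X) q)"
proof -
  define C where "C = component R (V - X) q"
  have CX: "C \<subseteq> V - X" using component_subset[OF q] by (simp add: C_def)
  have reach: "u \<in> C \<or> (within R (V - C))\<^sup>*\<^sup>* u p" if "R\<^sup>*\<^sup>* u p" for u
    using that
  proof (induction rule: converse_rtranclp_induct)
    case (step u v)
    consider "u \<in> X" | "u \<in> C" | "u \<notin> X" "u \<notin> C" by blast
    then show ?case
    proof cases
      case 1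
      then have "(within R X)\<^sup>*\<^sup>* u p" using X(2,3) by (simp add: connected_on_def)
      moreover have "X \<subseteq> V - C" using CX X(1) by blast
      ultimately show ?thesis by (metis predicate2D rtranclp_mono within_mono)
    next
      case 3
      have "v \<notin> C"
      proof
        assume "v \<in> C"
        moreover have "within R (V - X) v u"
          using step.hyps(1) 3 CX \<open>v \<in> C\<close> edges sympD[OF assms(1)] by (auto simp: within_def)
        ultimately have "u \<in> C" unfolding C_def by (rule component_closed)
        with 3 show False by simp
      qed
      then have "(within R (V - C))\<^sup>*\<^sup>* v p" using step.IH by blast
      moreover have "within R (V - C) u v"
        using step.hyps(1) 3 \<open>v \<notin> C\<close> edges by (auto simp: within_def)
      ultimately show ?thesis by (blast intro: converse_rtranclp_into_rtranclp)
    qed simp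
  qed simp
  show ?thesis
    unfolding connected_on_def C_def[symmetric]
  proof (intro ballI)
    fix u w assume "u \<in> V - C" "w \<in> V - C"
    then have "(within R (V - C))\<^sup>*\<^sup>* u p" "(within R (V - C))\<^sup>*\<^sup>* w p"
      using reach conn by blast+
    then show "(within R (V - C))\<^sup>*\<^sup>* u w"
      using rtranclp_sym[OF symp_within[OF assms(1)]] by (meson rtranclp_trans)
  qed
qed

lemma rtranclp_image_interval:
  fixes f :: "'a \<Rightarrow> int"
  assumes "R\<^sup>*\<^sup>* a b" "\<And>u w. R u w \<Longrightarrow> \<bar>f w - f u\<bar> \<le> 1"
  shows "{min (f a) (f b)..max (f a) (f b)} \<subseteq> f ` {c. R\<^sup>*\<^sup>* a c}"
  using assms(1)
proof (induction rule: rtranclp_induct)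
  case (step b c)
  have "{min (f a) (f c)..max (f a) (f c)} \<subseteq> {min (f a) (f b)..max (f a) (f b)} \<union> {f c}"
    using assms(2)[OF step.hyps(2)] by auto
  moreover have "f c \<in> f ` {c. R\<^sup>*\<^sup>* a c}"
    using step.hyps by (blast intro: rtranclp.rtrancl_into_rtrancl)
  ultimately show ?case using step.IH by blast
qed simp

lemma component_exit_edge:
  fixes f :: "'a \<Rightarrow> int"
  assumes "R\<^sup>*\<^sup>* q b" "b \<notin> component R A q" "\<And>u w. R u w \<Longrightarrow> \<bar>f w - f u\<bar> \<le> 1"
  obtains u w where "R u w" "u \<in> component R A q" "w \<notin> component R A q"
    "{min (f q) (f u)..max (f q) (f u)} \<subseteq> f ` component R A q"
proof -
  obtain u w where uw: "R u w" "u \<in> component R A q" "w \<notin> component R A q"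
    using rtranclp_exit_edge[OF assms(1) start_in_component assms(2)] by blast
  have "(within R A)\<^sup>*\<^sup>* q u" using uw(2) by (simp add: component_def)
  then have "{min (f q) (f u)..max (f q) (f u)} \<subseteq> f ` component R A q"
    unfolding component_def
    by (rule rtranclp_image_interval) (use assms(3) in \<open>force simp: within_def\<close>)
  with uw show thesis by (rule that)
qed

lemma component_spans_to_threshold:
  fixes R :: "pos \<Rightarrow> pos \<Rightarrow> bool"
  assumes adj: "\<And>u w. R u w \<Longrightarrow> \<bar>fst w - fst u\<bar> + \<bar>snd w - snd u\<bar> = 1"
    and edges: "\<And>u w. R u w \<Longrightarrow> w \<in> V"
    and "R\<^sup>*\<^sup>* a b" "a \<in> V" "fst a \<le> j" "j < fst b"
  shows "{fst a..j} \<subseteq> fst ` component R {p \<in> V. fst p \<le> j} a"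
proof -
  let ?L = "{p \<in> V. fst p \<le> j}"
  let ?X = "component R ?L a"
  have XL: "?X \<subseteq> ?L" using assms(4,5) by (intro component_subset) simp
  have "b \<notin> ?X" using XL assms(6) by auto
  moreover have "\<bar>fst w - fst u\<bar> \<le> 1" if "R u w" for u w
    using adj[OF that] abs_ge_zero[of "snd w - snd u"] by linarith
  ultimately obtain u w where uw: "R u w" "u \<in> ?X" "w \<notin> ?X"
    and span: "{min (fst a) (fst u)..max (fst a) (fst u)} \<subseteq> fst ` ?X"
    by (rule component_exit_edge[OF assms(3)])
  have "w \<notin> ?L"
  proof
    assume "w \<in> ?L"
    then have "within R ?L u w" using uw(1,2) XL by (auto simp: within_def)
    then have "w \<in> ?X" by (rule component_closed[OF uw(2)])
    with uw(3) show False by contradiction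
  qed
  then have "j < fst w" using edges[OF uw(1)] by simp
  moreover have "fst u \<le> j" using uw(2) XL by auto
  ultimately have "fst u = j" using adj[OF uw(1)] by linarith
  then show ?thesis using span assms(5) by simp
qed

lemma component_of_complement_boundary:
  assumes "symp R" "p \<in> L" "q \<in> V - component R L p"
    and "u \<in> component R (V - component R L p) q" "w \<in> V - component R (V - component R L p) q"
    and "R u w"
  shows "w \<in> component R L p \<and> u \<notin> L"
proof -
  let ?X = "component R L p" and ?C = "component R (V - component R L p) q"
  have CX: "?C \<subseteq> V - ?X" using assms(3) by (rule component_subset)
  have "w \<in> ?X"
  proof (rule ccontr)
    assume "w \<notin> ?X"
    then have "within R (V - ?X) u w" using assms(4-6) CX by (auto simp: within_def)
    with assms(4) have "w \<in> ?C" by (rule component_closed)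
    with assms(5) show False by simp
  qed
  moreover have "u \<notin> L"
  proof
    assume "u \<in> L"
    then have "within R L w u"
      using \<open>w \<in> ?X\<close> component_subset[OF assms(2)] assms(6) sympD[OF assms(1)]
      by (auto simp: within_def)
    with \<open>w \<in> ?X\<close> have "u \<in> ?X" by (rule component_closed)
    with assms(4) CX show False by blast
  qed
  ultimately show ?thesis ..
qed

text \<open>The parts are \<open>C\<close> and its complement, where \<open>X\<close> is the component of the bottom-left
  corner among the first \<open>n + 1\<close> columns and \<open>C\<close> the component of the bottom-right corner
  outside \<open>X\<close>.\<close>

lemma grid_split:
  fixes R :: "pos \<Rightarrow> pos \<Rightarrow> bool" and x y :: int and K H n :: nat
  defines "V \<equiv> {x + 1..x + int K} \<times> {y + 1..y + int H}"
  assumes sym: "symp R"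
    and adj: "\<And>u w. R u w \<Longrightarrow> \<bar>fst w - fst u\<bar> + \<bar>snd w - snd u\<bar> = 1"
    and edges: "\<And>u w. R u w \<Longrightarrow> u \<in> V \<and> w \<in> V"
    and conn: "\<And>u w. u \<in> V \<Longrightarrow> w \<in> V \<Longrightarrow> R\<^sup>*\<^sup>* u w"
    and K: "2 * n + 2 \<le> K" and H: "0 < H"
  obtains A B where "A \<union> B = V" "A \<inter> B = {}" "connected_on R A" "connected_on R B"
    "n < card A" "n < card B"
    "\<And>u w. u \<in> A \<Longrightarrow> w \<in> B \<Longrightarrow> R u w \<Longrightarrow> u = (x + int n + 2, snd u) \<and> w = (x + int n + 1, snd u)"
proof -
  define j where "j = x + int n + 1"
  define L where "L = {p \<in> V. fst p \<le> j}"
  define p0 where "p0 = (x + 1, y + 1)"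
  define q0 where "q0 = (x + int K, y + 1)"
  define X where "X = component R L p0"
  define C where "C = component R (V - X) q0"
  have p0: "p0 \<in> V" "p0 \<in> L" and q0: "q0 \<in> V" "q0 \<notin> L"
    using K H by (auto simp: V_def L_def p0_def q0_def j_def)
  have XL: "X \<subseteq> L" unfolding X_def using p0(2) by (rule component_subset)
  then have "q0 \<in> V - X" using q0 by blast
  then have CX: "C \<subseteq> V - X" unfolding C_def by (rule component_subset)
  have p0X: "p0 \<in> X" by (simp add: X_def start_in_component)
  have q0C: "q0 \<in> C" by (simp add: C_def start_in_component)
  have "finite V" by (simp add: V_def)
  have fst_step: "\<bar>fst w - fst u\<bar> \<le> 1" if "R u w" for u w
    using adj[OF that] abs_ge_zero[of "snd w - snd u"] by linarith
  have connB: "connected_on R (V - C)"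
    unfolding C_def
  proof (rule connected_on_complement_component[OF sym edges _ _ p0X])
    show "X \<subseteq> V" using XL by (auto simp: L_def)
    show "connected_on R X" unfolding X_def by (rule component_connected[OF sym])
  qed (use conn p0 \<open>q0 \<in> V - X\<close> in auto)
  have crossing: "fst u = j + 1 \<and> w = (j, snd u)" if "u \<in> C" "w \<in> V - C" "R u w" for u w
  proof -
    have "w \<in> X" "u \<notin> L"
      using component_of_complement_boundary[OF sym p0(2) _ _ _ that(3)] \<open>q0 \<in> V - X\<close> that(1,2)
      unfolding X_def C_def by blast+
    then have "j < fst u" "fst w \<le> j" using that(1) CX XL by (auto simp: L_def)
    then show ?thesis using adj[OF that(3)] by (auto simp: prod_eq_iff)
  qed
  have sizeB: "n < card (V - C)"
  proof -
    have "{x + 1..j} \<subseteq> fst ` X"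
      unfolding X_def L_def
      using component_spans_to_threshold[OF adj, where V=V and a=p0 and b=q0 and j=j] edges conn p0 q0
      by (auto simp: p0_def L_def)
    moreover have "finite X" using XL \<open>finite V\<close> by (auto simp: L_def intro: finite_subset)
    ultimately have "card {x + 1..j} \<le> card X" by (blast intro: surj_card_le)
    also have "\<dots> \<le> card (V - C)"
      using CX XL \<open>finite V\<close> by (intro card_mono) (auto simp: L_def)
    finally show ?thesis by (simp add: j_def)
  qed
  have sizeC: "n < card C"
  proof -
    have "p0 \<notin> C" using CX p0X by blast
    then obtain u w where uw: "R u w" "u \<in> C" "w \<notin> C"
      and span: "{min (fst q0) (fst u)..max (fst q0) (fst u)} \<subseteq> fst ` C"
      using component_exit_edge[where f=fst, OF conn[OF q0(1) p0(1)] _ fst_step] unfolding C_def by blast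
    then have "fst u = j + 1" using crossing edges by blast
    then have "{j + 1..x + int K} \<subseteq> fst ` C" using span K by (simp add: q0_def j_def)
    moreover have "finite C" using CX \<open>finite V\<close> by (auto intro: finite_subset)
    ultimately have "card {j + 1..x + int K} \<le> card C" by (blast intro: surj_card_le)
    then show ?thesis using K by (simp add: j_def)
  qed
  show ?thesis
  proof (rule that[of C "V - C"])
    show "connected_on R C" unfolding C_def by (rule component_connected[OF sym])
    fix u w assume "u \<in> C" "w \<in> V - C" "R u w"
    then show "u = (x + int n + 2, snd u) \<and> w = (x + int n + 1, snd u)"
      using crossing[of u w] by (simp add: j_def prod_eq_iff)
  qed (use CX connB sizeB sizeC in auto)
qed

section \<open>Translation invariance\<close>

lemma translate_shifted [simp]: "translate v a (fst p + fst v, snd p + snd v) = a p"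
  by (simp add: translate_def)

lemma dom_translate: "dom (translate v a) = (\<lambda>p. (fst p + fst v, snd p + snd v)) ` dom a"
proof (intro set_eqI iffI)
  fix p assume "p \<in> dom (translate v a)"
  then have "(fst p - fst v, snd p - snd v) \<in> dom a" by (simp add: dom_def translate_def)
  then show "p \<in> (\<lambda>p. (fst p + fst v, snd p + snd v)) ` dom a"
    by (rule image_eqI[rotated]) simp
qed (auto simp: dom_def translate_def)

lemma ran_translate: "ran (translate v a) = ran a"
proof (intro set_eqI iffI)
  fix b assume "b \<in> ran (translate v a)"
  then obtain p where "translate v a p = Some b" by (auto simp: ran_def)
  then show "b \<in> ran a" by (auto simp: translate_def intro: ranI)
next
  fix b assume "b \<in> ran a"
  then obtain p where "a p = Some b" by (auto simp: ran_def)
  then have "translate v a (fst p + fst v, snd p + snd v) = Some b" by simp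
  then show "b \<in> ran (translate v a)" by (rule ranI)
qed

lemma bond_str_translate:
  "bond_str str (translate v a) p q =
     bond_str str a (fst p - fst v, snd p - snd v) (fst q - fst v, snd q - snd v)"
proof -
  have "((fst q - fst v, snd q - snd v) = (fst p - fst v + 1, snd p - snd v)) = (q = (fst p + 1, snd p))"
    "((fst q - fst v, snd q - snd v) = (fst p - fst v - 1, snd p - snd v)) = (q = (fst p - 1, snd p))"
    "((fst q - fst v, snd q - snd v) = (fst p - fst v, snd p - snd v + 1)) = (q = (fst p, snd p + 1))"
    "((fst q - fst v, snd q - snd v) = (fst p - fst v, snd p - snd v - 1)) = (q = (fst p, snd p - 1))"
    by (auto simp: prod_eq_iff)
  then show ?thesis
    unfolding bond_str_def translate_def fst_conv snd_conv by presburger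
qed

lemma bonded_translate:
  "bonded str (translate v a) (fst p + fst v, snd p + snd v) (fst q + fst v, snd q + snd v)
     \<longleftrightarrow> bonded str a p q"
  by (simp add: bonded_def bond_str_translate)

lemma rtranclp_map:
  assumes "R\<^sup>*\<^sup>* x y" "\<And>u w. R u w \<Longrightarrow> R' (f u) (f w)"
  shows "R'\<^sup>*\<^sup>* (f x) (f y)"
  using assms(1) by induction (auto intro: rtranclp.rtrancl_into_rtrancl assms(2))

lemma bond_connected_translate:
  assumes "bond_connected str a"
  shows "bond_connected str (translate v a)"
  unfolding bond_connected_def
proof (intro conjI ballI)
  let ?s = "\<lambda>p. (fst p + fst v, snd p + snd v)"
  show "dom (translate v a) \<noteq> {}" using assms by (simp add: bond_connected_def dom_translate)
  fix p q assume "p \<in> dom (translate v a)" "q \<in> dom (translate v a)"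
  then obtain p' q' where pq: "p' \<in> dom a" "q' \<in> dom a" "p = ?s p'" "q = ?s q'"
    unfolding dom_translate by blast
  have "(bonded str a)\<^sup>*\<^sup>* p' q'" using assms pq unfolding bond_connected_def by blast
  then have "(bonded str (translate v a))\<^sup>*\<^sup>* (?s p') (?s q')"
    by (rule rtranclp_map) (simp add: bonded_translate)
  then show "(bonded str (translate v a))\<^sup>*\<^sup>* p q" using pq by simp
qed

lemma self_in_supertile: "a \<in> supertile a"
proof -
  have "a = translate (0, 0) a" by (simp add: translate_def)
  then show ?thesis unfolding supertile_def by blast
qed

lemma supertile_transfer:
  assumes "\<And>v b. P b \<Longrightarrow> P (translate v b)"
    and "a \<in> supertile g" "P a" "b \<in> supertile g"
  shows "P b"
proof -
  obtain u w where "a = translate u g" "b = translate w g"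
    using assms(2,4) by (auto simp: supertile_def)
  then have "b = translate (fst w - fst u, snd w - snd u) a" by (auto simp: translate_def)
  then show ?thesis using assms(1,3) by simp
qed

section \<open>Bonds\<close>

lemma glue_bond_sym: "glue_bond str g g' = glue_bond str g' g"
  by (auto simp: glue_bond_def)

lemma bond_str_sym: "bond_str str a p q = bond_str str a q p"
proof (cases "a p")
  case None
  then show ?thesis by (simp add: bond_str_def split: option.splits)
next
  case (Some s)
  show ?thesis
  proof (cases "a q")
    case None
    then show ?thesis using Some by (simp add: bond_str_def)
  next
    case (Some t)
    obtain p1 p2 q1 q2 where pq: "p = (p1, p2)" "q = (q1, q2)" by (cases p, cases q)
    consider "q1 = p1 + 1 \<and> q2 = p2" | "q1 = p1 - 1 \<and> q2 = p2" | "q1 = p1 \<and> q2 = p2 + 1"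
      | "q1 = p1 \<and> q2 = p2 - 1"
      | "\<not> (q1 = p1 + 1 \<and> q2 = p2) \<and> \<not> (q1 = p1 - 1 \<and> q2 = p2) \<and> \<not> (q1 = p1 \<and> q2 = p2 + 1)
          \<and> \<not> (q1 = p1 \<and> q2 = p2 - 1)"
      by blast
    then show ?thesis
      by cases (use \<open>a p = Some s\<close> Some pq in \<open>auto simp: bond_str_def glue_bond_sym\<close>)
  qed
qed

lemma bonded_sym: "symp (bonded str a)"
  by (auto intro: sympI simp: bonded_def bond_str_sym)

lemma bonded_in_dom: "bonded str a p q \<Longrightarrow> p \<in> dom a \<and> q \<in> dom a"
  by (auto simp: bonded_def bond_str_def split: option.splits)

lemma bonded_restrict_map: "bonded str (\<gamma> |` A) = within (bonded str \<gamma>) A"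
  by (auto simp: fun_eq_iff within_def bonded_def bond_str_def restrict_map_def split: option.split)

lemma bond_connected_restrict_iff:
  "A \<subseteq> dom \<gamma> \<Longrightarrow> bond_connected str (\<gamma> |` A) \<longleftrightarrow> A \<noteq> {} \<and> connected_on (bonded str \<gamma>) A"
  by (simp add: bond_connected_def connected_on_def bonded_restrict_map Int_absorb1)

lemma map_add_restrict_dom_left: "dom a \<inter> dom b = {} \<Longrightarrow> (a ++ b) |` dom a = a"
  by (auto simp: fun_eq_iff restrict_map_def map_add_def split: option.split)

lemma map_add_restrict_dom_right: "(a ++ b) |` dom b = b"
  by (auto simp: fun_eq_iff restrict_map_def map_add_def split: option.split)

lemma restrict_bond_connected_rtranclp:
  assumes "A \<subseteq> dom \<gamma>" "bond_connected str (\<gamma> |` A)"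
  shows "\<forall>u\<in>A. \<forall>w\<in>A. (bonded str \<gamma>)\<^sup>*\<^sup>* u w"
proof (intro ballI)
  fix u w assume "u \<in> A" "w \<in> A"
  then have "(within (bonded str \<gamma>) A)\<^sup>*\<^sup>* u w"
    using assms by (simp add: bond_connected_restrict_iff connected_on_def)
  then show "(bonded str \<gamma>)\<^sup>*\<^sup>* u w" by (metis predicate2D rtranclp_mono within_le)
qed

lemma bond_connected_map_add:
  assumes disj: "dom a \<inter> dom b = {}"
    and conn: "bond_connected str a" "bond_connected str b"
    and cut: "0 < cut_str str (a ++ b) (dom a) (dom b)"
  shows "bond_connected str (a ++ b)"
proof -
  let ?R = "bonded str (a ++ b)"
  obtain p q where pq: "p \<in> dom a" "q \<in> dom b" "?R p q"
  proof -
    have "(\<Sum>(p, q) \<in> dom a \<times> dom b. bond_str str (a ++ b) p q) \<noteq> 0"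
      using cut by (simp add: cut_str_def)
    then show thesis
      by (rule sum.not_neutral_contains_not_neutral) (auto intro: that simp: bonded_def)
  qed
  have "\<forall>u\<in>dom a. \<forall>w\<in>dom a. ?R\<^sup>*\<^sup>* u w"
    using restrict_bond_connected_rtranclp[of "dom a" "a ++ b" str] conn(1)
    by (simp add: map_add_restrict_dom_left[OF disj])
  moreover have "\<forall>u\<in>dom b. \<forall>w\<in>dom b. ?R\<^sup>*\<^sup>* u w"
    using restrict_bond_connected_rtranclp[of "dom b" "a ++ b" str] conn(2)
    by (simp add: map_add_restrict_dom_right)
  ultimately have "\<forall>u\<in>dom a \<union> dom b. \<forall>w\<in>dom a \<union> dom b. ?R\<^sup>*\<^sup>* u w"
    using connected_union_by_edge[OF bonded_sym _ _ pq] by blast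
  then show ?thesis using pq(1) by (auto simp: bond_connected_def)
qed

lemma bond_str_adj:
  assumes "bond_str str a p q > 0"
  shows "\<bar>fst q - fst p\<bar> + \<bar>snd q - snd p\<bar> = 1"
proof (rule ccontr)
  assume n: "\<bar>fst q - fst p\<bar> + \<bar>snd q - snd p\<bar> \<noteq> 1"
  have "q \<noteq> (fst p + 1, snd p)" "q \<noteq> (fst p - 1, snd p)" "q \<noteq> (fst p, snd p + 1)" "q \<noteq> (fst p, snd p - 1)"
    using n by auto
  then have "bond_str str a p q = 0" unfolding bond_str_def by (simp split: option.split)
  then show False using assms by simp
qed

section \<open>Producible and terminal supertiles\<close>

definition wf_assembly :: "'g tile set \<Rightarrow> 'g assembly \<Rightarrow> bool" where
  "wf_assembly T a \<longleftrightarrow> finite (dom a) \<and> dom a \<noteq> {} \<and> ran a \<subseteq> T"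

lemma wf_assembly_translate: "wf_assembly T a \<Longrightarrow> wf_assembly T (translate v a)"
  by (simp add: wf_assembly_def dom_translate ran_translate)

lemma producible_wf_assembly:
  assumes "S \<in> producible str T \<tau>" "a \<in> S"
  shows "wf_assembly T a"
  using assms
proof (induction arbitrary: a)
  case (single t)
  have "wf_assembly T [(0, 0) \<mapsto> t]" using single by (simp add: wf_assembly_def)
  then show ?case
    using supertile_transfer[where P="wf_assembly T", OF wf_assembly_translate self_in_supertile]
      single by blast
next
  case (combine S1 S2 \<gamma>)
  then obtain a b where ab: "a \<in> S1" "b \<in> S2" "dom a \<inter> dom b = {}" "a ++ b \<in> supertile \<gamma>"
    unfolding can_combine_def by blast
  then have "wf_assembly T (a ++ b)"
    using combine.IH by (auto simp: wf_assembly_def ran_map_add)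
  then show ?case
    using supertile_transfer[where P="wf_assembly T", OF wf_assembly_translate ab(4)] combine.prems by blast
next
  case (break1 S \<alpha> \<beta>)
  then obtain a b where ab: "a \<in> supertile \<alpha>" "dom a \<inter> dom b = {}" "bond_connected str a"
    "a ++ b \<in> S"
    unfolding can_break_def by blast
  then have "wf_assembly T a"
    using break1.IH[OF ab(4)] by (auto simp: wf_assembly_def ran_map_add bond_connected_def)
  then show ?case
    using supertile_transfer[where P="wf_assembly T", OF wf_assembly_translate ab(1)] break1.prems by blast
next
  case (break2 S \<alpha> \<beta>)
  then obtain a b where ab: "b \<in> supertile \<beta>" "dom a \<inter> dom b = {}" "bond_connected str b"
    "a ++ b \<in> S"
    unfolding can_break_def by blast
  then have "wf_assembly T b"
    using break2.IH[OF ab(4)] by (auto simp: wf_assembly_def ran_map_add bond_connected_def)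
  then show ?case
    using supertile_transfer[where P="wf_assembly T", OF wf_assembly_translate ab(1)] break2.prems by blast
qed

lemma producible_bond_connected:
  assumes "S \<in> producible str T \<tau>" "a \<in> S" "mono \<tau>" "0 < \<tau> 1"
  shows "bond_connected str a"
  using assms(1,2)
proof (induction arbitrary: a)
  case (single t)
  have "bond_connected str [(0, 0) \<mapsto> t]" by (simp add: bond_connected_def)
  then show ?case
    using supertile_transfer[where P="bond_connected str", OF bond_connected_translate self_in_supertile]
      single by blast
next
  case (combine S1 S2 \<gamma>)
  then obtain a b where ab: "a \<in> S1" "b \<in> S2" "dom a \<inter> dom b = {}" "a ++ b \<in> supertile \<gamma>"
    and cut: "\<tau> (min (asize a) (asize b)) \<le> cut_str str (a ++ b) (dom a) (dom b)"
    unfolding can_combine_def by blast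
  have "wf_assembly T a" "wf_assembly T b"
    using producible_wf_assembly combine.hyps(1,2) ab(1,2) by blast+
  then have "1 \<le> min (asize a) (asize b)"
    by (auto simp: wf_assembly_def asize_def Suc_le_eq card_gt_0_iff)
  then have "0 < cut_str str (a ++ b) (dom a) (dom b)"
    using cut assms(3,4) by (meson monoD order.strict_trans2)
  then have "bond_connected str (a ++ b)"
    using bond_connected_map_add ab(1-3) combine.IH by blast
  then show ?case
    using supertile_transfer[where P="bond_connected str", OF bond_connected_translate ab(4)]
      combine.prems by blast
next
  case (break1 S \<alpha> \<beta>)
  then show ?case
    using supertile_transfer[where P="bond_connected str", OF bond_connected_translate]
    unfolding can_break_def by blast
next
  case (break2 S \<alpha> \<beta>)
  then show ?case
    using supertile_transfer[where P="bond_connected str", OF bond_connected_translate]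
    unfolding can_break_def by blast
qed

lemma terminal_temperature_pos:
  assumes trm: "terminal str T \<tau> S" and "\<gamma> \<in> S"
  shows "0 < \<tau> 1"
proof (rule ccontr)
  assume "\<not> 0 < \<tau> 1"
  have "wf_assembly T \<gamma>"
    using producible_wf_assembly assms trm by (auto simp: terminal_def)
  then have fin: "finite (dom \<gamma>)" and "dom \<gamma> \<noteq> {}" "ran \<gamma> \<subseteq> T"
    by (auto simp: wf_assembly_def)
  then obtain p0 t where "\<gamma> p0 = Some t" by blast
  then have t: "t \<in> T" using \<open>ran \<gamma> \<subseteq> T\<close> by (auto intro: ranI)
  define v where "v = (Max (fst ` dom \<gamma>) + 2, 0::int)"
  define \<beta> where "\<beta> = translate v [(0, 0) \<mapsto> t]"
  have dom_\<beta>: "dom \<beta> = {v}"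
    unfolding \<beta>_def dom_translate by simp
  have far: "2 \<le> fst v - fst p" if "p \<in> dom \<gamma>" for p
    using Max_ge[OF finite_imageI[OF fin], of "fst p"] that by (simp add: v_def)
  then have "v \<notin> dom \<gamma>" by fastforce
  then have disj: "dom \<gamma> \<inter> dom \<beta> = {}" using dom_\<beta> by simp
  have "bond_str str (\<gamma> ++ \<beta>) p q = 0" if "p \<in> dom \<gamma>" "q \<in> dom \<beta>" for p q
  proof -
    have "2 \<le> fst q - fst p" using far that dom_\<beta> by simp
    then show ?thesis using bond_str_adj[of str "\<gamma> ++ \<beta>" p q] by linarith
  qed
  then have cut: "cut_str str (\<gamma> ++ \<beta>) (dom \<gamma>) (dom \<beta>) = 0"
    unfolding cut_str_def by (intro sum.neutral) auto
  have size: "min (asize \<gamma>) (asize \<beta>) = 1"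
    using card_gt_0_iff[of "dom \<gamma>"] fin \<open>dom \<gamma> \<noteq> {}\<close> dom_\<beta> by (simp add: asize_def)
  then have \<tau>: "\<tau> (min (asize \<gamma>) (asize \<beta>)) = 0" using \<open>\<not> 0 < \<tau> 1\<close> by simp
  have \<beta>_tile: "\<beta> \<in> supertile [(0, 0) \<mapsto> t]" unfolding supertile_def \<beta>_def by blast
  have "can_combine str \<tau> S (supertile [(0, 0) \<mapsto> t]) (supertile (\<gamma> ++ \<beta>))"
    unfolding can_combine_def
    by (rule bexI[where x=\<gamma>], rule bexI[where x=\<beta>], intro conjI)
      (simp_all add: \<open>\<gamma> \<in> S\<close> disj \<tau> cut \<beta>_tile self_in_supertile)
  moreover have "supertile [(0, 0) \<mapsto> t] \<in> producible str T \<tau>" using t by (rule producible.single)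
  ultimately show False using trm unfolding terminal_def by blast
qed

lemma terminal_cut_ge_temperature:
  assumes "terminal str T \<tau> S" "\<gamma> \<in> S" "A \<union> B = dom \<gamma>" "A \<inter> B = {}"
    and "bond_connected str (\<gamma> |` A)" "bond_connected str (\<gamma> |` B)"
  shows "\<tau> (min (card A) (card B)) \<le> cut_str str \<gamma> A B"
proof -
  have split: "\<gamma> |` A ++ \<gamma> |` B = \<gamma>"
    using assms(3) by (force simp: fun_eq_iff map_add_def restrict_map_def split: option.split)
  have dom: "dom (\<gamma> |` A) = A" "dom (\<gamma> |` B) = B" using assms(3) by auto
  have "\<not> can_break str \<tau> S (supertile (\<gamma> |` A)) (supertile (\<gamma> |` B))"
    using assms(1) by (simp add: terminal_def)
  moreover have "can_break str \<tau> S (supertile (\<gamma> |` A)) (supertile (\<gamma> |` B))"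
    if "cut_str str \<gamma> A B < \<tau> (min (card A) (card B))"
    unfolding can_break_def
  proof (rule bexI[where x="\<gamma> |` A"], rule bexI[where x="\<gamma> |` B"], intro conjI)
    show "cut_str str (\<gamma> |` A ++ \<gamma> |` B) (dom (\<gamma> |` A)) (dom (\<gamma> |` B))
        < \<tau> (min (asize (\<gamma> |` A)) (asize (\<gamma> |` B)))"
      using that split dom by (simp add: asize_def)
  qed (use assms(2,4-6) split dom self_in_supertile in simp_all)
  ultimately show ?thesis by (meson not_less)
qed

section \<open>Cuts of terminal rectangles\<close>

definition max_glue_strength :: "('g \<Rightarrow> nat) \<Rightarrow> 'g tile set \<Rightarrow> nat" where
  "max_glue_strength str T = Max (str ` (\<Union>t\<in>T. {gN t, gE t, gS t, gW t}))"

lemma bond_str_le_max_glue_strength: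
  assumes "finite T" "ran a \<subseteq> T"
  shows "bond_str str a p q \<le> max_glue_strength str T"
proof (cases "a p")
  case (Some s)
  then have "s \<in> T" using assms(2) by (auto intro: ranI)
  then have "glue_bond str g g' \<le> max_glue_strength str T" if "g \<in> {gN s, gE s, gS s, gW s}" for g g'
    using that assms(1) unfolding max_glue_strength_def glue_bond_def
    by (auto intro!: Max_ge)
  with Some show ?thesis by (auto simp: bond_str_def split: option.split)
qed (simp add: bond_str_def)

lemma cut_str_le_card_mult_max:
  assumes "finite T" "ran \<gamma> \<subseteq> T" "finite A" "finite B" "finite E"
    and "\<And>p q. p \<in> A \<Longrightarrow> q \<in> B \<Longrightarrow> bonded str \<gamma> p q \<Longrightarrow> (p, q) \<in> E"
  shows "cut_str str \<gamma> A B \<le> card E * max_glue_strength str T"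
proof -
  let ?g = "\<lambda>(p, q). bond_str str \<gamma> p q"
  have "cut_str str \<gamma> A B = sum ?g (A \<times> B \<inter> E)"
    unfolding cut_str_def using assms(3,4,6)
    by (intro sum.mono_neutral_right) (auto simp: bonded_def)
  also have "\<dots> \<le> sum ?g E" using assms(5) by (intro sum_mono2) auto
  also have "\<dots> \<le> card E * max_glue_strength str T"
    using sum_bounded_above[of E ?g] bond_str_le_max_glue_strength[OF assms(1,2)] by fastforce
  finally show ?thesis .
qed

lemma rectangle_balanced_cut:
  assumes "finite T" "ran \<gamma> \<subseteq> T" "bond_connected str \<gamma>"
    and dom: "dom \<gamma> = {x + 1..x + int K} \<times> {y + 1..y + int H}" and K: "2 * n + 2 \<le> K"
  obtains A B where "A \<union> B = dom \<gamma>" "A \<inter> B = {}"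
    "bond_connected str (\<gamma> |` A)" "bond_connected str (\<gamma> |` B)" "n < card A" "n < card B"
    "cut_str str \<gamma> A B \<le> H * max_glue_strength str T"
proof -
  let ?R = "bonded str \<gamma>"
  have "0 < H" using assms(3) dom by (auto simp: bond_connected_def)
  have adj: "\<And>u w. ?R u w \<Longrightarrow> \<bar>fst w - fst u\<bar> + \<bar>snd w - snd u\<bar> = 1"
    by (simp add: bonded_def bond_str_adj)
  have edges: "\<And>u w. ?R u w \<Longrightarrow>
      u \<in> {x + 1..x + int K} \<times> {y + 1..y + int H} \<and> w \<in> {x + 1..x + int K} \<times> {y + 1..y + int H}"
    using bonded_in_dom[of str \<gamma>] unfolding dom by blast
  have conn: "\<And>u w. u \<in> {x + 1..x + int K} \<times> {y + 1..y + int H} \<Longrightarrow>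
      w \<in> {x + 1..x + int K} \<times> {y + 1..y + int H} \<Longrightarrow> ?R\<^sup>*\<^sup>* u w"
    using assms(3) unfolding bond_connected_def dom by blast
  obtain A B where AB: "A \<union> B = dom \<gamma>" "A \<inter> B = {}"
    "connected_on ?R A" "connected_on ?R B" "n < card A" "n < card B"
    and crossing: "\<And>u w. u \<in> A \<Longrightarrow> w \<in> B \<Longrightarrow> ?R u w \<Longrightarrow>
      u = (x + int n + 2, snd u) \<and> w = (x + int n + 1, snd u)"
    using grid_split[OF bonded_sym adj edges conn K \<open>0 < H\<close>] unfolding dom[symmetric] by blast
  let ?E = "(\<lambda>y'. ((x + int n + 2, y'), (x + int n + 1, y'))) ` {y + 1..y + int H}"
  have "cut_str str \<gamma> A B \<le> card ?E * max_glue_strength str T"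
  proof (rule cut_str_le_card_mult_max[OF assms(1,2)])
    have "finite (A \<union> B)" using AB(1) dom by simp
    then show "finite A" "finite B" by simp_all
    fix p q assume pq: "p \<in> A" "q \<in> B" "?R p q"
    have "p \<in> {x + 1..x + int K} \<times> {y + 1..y + int H}" using pq(1) AB(1) dom by blast
    then have "snd p \<in> {y + 1..y + int H}" by (simp add: mem_Times_iff)
    then show "(p, q) \<in> ?E" using crossing[OF pq] by (intro image_eqI[where x="snd p"]) auto
  qed simp
  also have "\<dots> \<le> H * max_glue_strength str T"
    using card_image_le[of "{y + 1..y + int H}"] by (intro mult_le_mono1) simp
  finally have cut: "cut_str str \<gamma> A B \<le> H * max_glue_strength str T" .
  have "A \<noteq> {}" "B \<noteq> {}" using AB(5,6) by auto
  then have "bond_connected str (\<gamma> |` A)" "bond_connected str (\<gamma> |` B)"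
    using AB(1,3,4) bond_connected_restrict_iff[of A \<gamma> str] bond_connected_restrict_iff[of B \<gamma> str]
    by blast+
  then show ?thesis using that AB(1,2,5,6) cut by blast
qed

lemma terminal_rectangle_temperature_bound:
  assumes "finite T" "mono \<tau>" "terminal str T \<tau> S" "\<gamma> \<in> S"
    and "dom \<gamma> = {x + 1..x + int K} \<times> {y + 1..y + int H}" "2 * n + 2 \<le> K"
  shows "\<tau> n \<le> H * max_glue_strength str T"
proof -
  have S: "S \<in> producible str T \<tau>" using assms(3) by (simp add: terminal_def)
  then have "wf_assembly T \<gamma>" using assms(4) by (rule producible_wf_assembly)
  then have ran: "ran \<gamma> \<subseteq> T" by (simp add: wf_assembly_def)
  have conn: "bond_connected str \<gamma>"
    using S assms(4,2) terminal_temperature_pos[OF assms(3,4)] by (rule producible_bond_connected)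
  obtain A B where AB: "A \<union> B = dom \<gamma>" "A \<inter> B = {}"
    "bond_connected str (\<gamma> |` A)" "bond_connected str (\<gamma> |` B)" "n < card A" "n < card B"
    "cut_str str \<gamma> A B \<le> H * max_glue_strength str T"
    by (rule rectangle_balanced_cut[OF assms(1) ran conn assms(5,6)])
  have "\<tau> n \<le> \<tau> (min (card A) (card B))" using assms(2) AB(5,6) by (simp add: monoD)
  also have "\<dots> \<le> cut_str str \<gamma> A B"
    using terminal_cut_ge_temperature[OF assms(3,4) AB(1-4)] .
  also have "\<dots> \<le> H * max_glue_strength str T" by (rule AB(7))
  finally show ?thesis .
qed

theorem theorem2:
  fixes T :: "'g tile set" and str :: "'g \<Rightarrow> nat" and c :: nat
    and \<tau> :: "nat \<Rightarrow> nat \<Rightarrow> nat" and k h :: "nat \<Rightarrow> nat"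
  assumes "finite T"
    and "\<And>i. mono (\<tau> i)"
    and "\<And>i. \<exists>P. is_rectangle (k i) (h i) P \<and> self_assembles str T (\<tau> i) P"
    and "\<And>i. h i \<le> c"
    and "inj k"
  shows "\<exists>C. \<forall>n. (INF i. \<tau> i n) \<le> C"
proof (intro exI allI)
  fix n
  have "finite (k -` {..2 * n + 2})" using assms(5) by (intro finite_vimageI) auto
  then obtain i where "i \<notin> k -` {..2 * n + 2}" using ex_new_if_finite[OF infinite_UNIV_nat] by blast
  then have wide: "2 * n + 2 \<le> k i" by simp
  obtain P where "is_rectangle (k i) (h i) P" "self_assembles str T (\<tau> i) P" using assms(3) by blast
  then obtain x y S \<gamma> where "dom \<gamma> = {x + 1..x + int (k i)} \<times> {y + 1..y + int (h i)}"
    and "terminal str T (\<tau> i) S" "\<gamma> \<in> S"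
    unfolding is_rectangle_def self_assembles_def by blast
  note rect = this
  have "(INF i. \<tau> i n) \<le> \<tau> i n" by (rule cINF_lower) (auto simp: bdd_below_def)
  also have "\<dots> \<le> h i * max_glue_strength str T"
    using terminal_rectangle_temperature_bound[OF assms(1,2)] rect wide by blast
  also have "\<dots> \<le> c * max_glue_strength str T" using assms(4) by simp
  finally show "(INF i. \<tau> i n) \<le> c * max_glue_strength str T" .
qed

end
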